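(* Let $L\ge1$ and $\Gamma^0\in\{0,1\}^L$ (coordinates indexed by $\mathbb{Z}/L\mathbb{Z}$, viewed as a cycle). Color the positions so that each maximal cyclic interval (run) of equal values in $\Gamma^0$ receives its own distinct color, and run the following colored copying process $\tilde\Gamma^i$: given $\tilde\Gamma^i$, choose a permutation $\sigma$ of $\{0,\dots,L-1\}$ uniformly at random, set $\Delta_0=\tilde\Gamma^i$, and for $1\le j\le L$ let $\Delta_j$ be obtained from $\Delta_{j-1}$ by giving position $\sigma(j-1)$ the current color of position $(\sigma(j-1)+1)\bmod L$ (all other positions unchanged); set $\tilde\Gamma^{i+1}=\Delta_L$. Fix one color and let $X_i$ be the number of positions of that color in $\tilde\Gamma^i$. Then $(X_i)_{i\ge0}$ is a martingale with respect to the filtration generated by $(\tilde\Gamma^i)_{i\ge0}$. *)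

theory Defs
  imports "HOL-Probability.Probability" "HOL-Combinatorics.Permutations"
begin

text \<open>Positions of the cycle Z/LZ are represented by the naturals 0..<L.
  A (colored) configuration is a function nat => 'c; only positions < L matter.\<close>

definition fwd_const_arc :: "nat \<Rightarrow> (nat \<Rightarrow> 'a) \<Rightarrow> nat \<Rightarrow> nat \<Rightarrow> bool" where
  "fwd_const_arc L g x y \<longleftrightarrow>
     (\<exists>d<L. (x + d) mod L = y \<and> (\<forall>t\<le>d. g ((x + t) mod L) = g x))"

definition same_run :: "nat \<Rightarrow> (nat \<Rightarrow> 'a) \<Rightarrow> nat \<Rightarrow> nat \<Rightarrow> bool" where
  "same_run L g x y \<longleftrightarrow> fwd_const_arc L g x y \<or> fwd_const_arc L g y x"

definition run_coloring :: "nat \<Rightarrow> (nat \<Rightarrow> 'a) \<Rightarrow> (nat \<Rightarrow> 'c) \<Rightarrow> bool" where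
  "run_coloring L g col \<longleftrightarrow> (\<forall>x<L. \<forall>y<L. col x = col y \<longleftrightarrow> same_run L g x y)"

definition copy_step :: "nat \<Rightarrow> (nat \<Rightarrow> 'c) \<Rightarrow> nat \<Rightarrow> (nat \<Rightarrow> 'c)" where
  "copy_step L D p = D(p := D (Suc p mod L))"

definition sweep :: "nat \<Rightarrow> (nat \<Rightarrow> nat) \<Rightarrow> (nat \<Rightarrow> 'c) \<Rightarrow> (nat \<Rightarrow> 'c)" where
  "sweep L \<sigma> G = foldl (\<lambda>D j. copy_step L D (\<sigma> j)) G [0..<L]"

definition step_pmf :: "nat \<Rightarrow> (nat \<Rightarrow> 'c) \<Rightarrow> (nat \<Rightarrow> 'c) pmf" where
  "step_pmf L G = map_pmf (\<lambda>\<sigma>. sweep L \<sigma> G) (pmf_of_set {\<sigma>. \<sigma> permutes {0..<L}})"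

text \<open>Joint law of the history (G^0, ..., G^n), as a list of length n+1.\<close>
fun traj :: "nat \<Rightarrow> (nat \<Rightarrow> 'c) \<Rightarrow> nat \<Rightarrow> (nat \<Rightarrow> 'c) list pmf" where
  "traj L G0 0 = return_pmf [G0]"
| "traj L G0 (Suc n) =
     bind_pmf (traj L G0 n) (\<lambda>h. map_pmf (\<lambda>g. h @ [g]) (step_pmf L (last h)))"

definition count_col :: "nat \<Rightarrow> 'c \<Rightarrow> (nat \<Rightarrow> 'c) \<Rightarrow> nat" where
  "count_col L a G = card {k \<in> {0..<L}. G k = a}"

text \<open>Martingale property of X(G^i) w.r.t. the natural filtration of a discrete
  process whose history laws are P n (lists of length n+1): since the filtration F_n
  is generated by the countably-valued history (G^0..G^n), E[X_{n+1} | F_n] = X_n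
  amounts to E[(X_{n+1} - X_n) 1_{history = h0}] = 0 for every history h0.
  (Integrability and adaptedness are automatic here: finitely supported laws,
  X_n a function of G^n.)\<close>
definition history_martingale :: "(nat \<Rightarrow> 's list pmf) \<Rightarrow> ('s \<Rightarrow> real) \<Rightarrow> bool" where
  "history_martingale P X \<longleftrightarrow>
     (\<forall>n h0. measure_pmf.expectation (P (Suc n))
        (\<lambda>h. (X (h ! Suc n) - X (h ! n)) * indicator {h. take (Suc n) h = h0} h) = 0)"

end

(*
  After a sweep with permutation \<sigma>, position x carries the initial colour of a single source
  position, copy_source L \<sigma> x.  So the expected number of positions of colour a after one step
  is the sum, over the positions y of colour a, of the expected number of descendants of y.
  Shifting every position chosen by \<sigma> one step along the cycle shifts the source map in the
  same way, and \<sigma> \<mapsto> shift \<circ> \<sigma> preserves the uniform law on permutations; hence the expected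
  number of descendants is the same for all y, and as the descendant sets partition the L
  positions it equals 1.  Thus every step preserves the expected colour count, which for the
  finitely supported history laws is exactly the martingale property.
*)

theory Submission
  imports Defs
begin

lemma copy_step_comp: "copy_step L (G \<circ> D) p = G \<circ> copy_step L D p"
  by (auto simp: copy_step_def)

lemma foldl_copy_step_comp:
  "foldl (copy_step L) (G \<circ> D) ps = G \<circ> foldl (copy_step L) D ps"
  by (induction ps arbitrary: D) (simp_all add: copy_step_comp)

lemma sweep_eq_foldl: "sweep L \<sigma> G = foldl (copy_step L) G (map \<sigma> [0..<L])"
  by (simp add: sweep_def foldl_map)

definition copy_source :: "nat \<Rightarrow> (nat \<Rightarrow> nat) \<Rightarrow> nat \<Rightarrow> nat" where
  "copy_source L \<sigma> = sweep L \<sigma> id"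

lemma sweep_eq_comp_copy_source: "sweep L \<sigma> G = G \<circ> copy_source L \<sigma>"
  using foldl_copy_step_comp[of L G id] by (simp add: sweep_eq_foldl copy_source_def)

lemma foldl_copy_step_lt:
  assumes "0 < L" "\<And>x. x < L \<Longrightarrow> D x < L" "x < L"
  shows "foldl (copy_step L) D ps x < L"
  using assms(2,3) by (induction ps arbitrary: D) (auto simp: copy_step_def assms(1))

lemma copy_source_lt: "x < L \<Longrightarrow> copy_source L \<sigma> x < L"
  by (simp add: copy_source_def sweep_eq_foldl foldl_copy_step_lt)

definition cyclic_succ :: "nat \<Rightarrow> nat \<Rightarrow> nat" where
  "cyclic_succ L x = (if x < L then Suc x mod L else x)"

lemma cyclic_succ_lt: "x < L \<Longrightarrow> cyclic_succ L x < L"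
  by (simp add: cyclic_succ_def)

lemma cyclic_succ_eq_iff: "x < L \<Longrightarrow> y < L \<Longrightarrow> cyclic_succ L x = cyclic_succ L y \<longleftrightarrow> x = y"
  by (auto simp: cyclic_succ_def mod_if split: if_splits)

lemma inj_on_cyclic_succ: "inj_on (cyclic_succ L) {0..<L}"
  by (auto simp: inj_on_def cyclic_succ_eq_iff)

lemma cyclic_succ_image: "cyclic_succ L ` {0..<L} = {0..<L}"
  by (rule endo_inj_surj) (auto simp: cyclic_succ_lt inj_on_cyclic_succ)

lemma cyclic_succ_permutes: "cyclic_succ L permutes {0..<L}"
  by (rule bij_imp_permutes[OF bij_betw_imageI[OF inj_on_cyclic_succ cyclic_succ_image]])
     (simp add: cyclic_succ_def)

lemma copy_step_cyclic_succ:
  assumes "p < L"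
  shows "copy_step L D (cyclic_succ L p) \<circ> cyclic_succ L = copy_step L (D \<circ> cyclic_succ L) p"
proof
  fix x
  show "(copy_step L D (cyclic_succ L p) \<circ> cyclic_succ L) x = copy_step L (D \<circ> cyclic_succ L) p x"
  proof (cases "x = p")
    case True
    then show ?thesis
      using assms cyclic_succ_lt[OF assms] by (simp add: copy_step_def cyclic_succ_def)
  next
    case False
    then have "cyclic_succ L x \<noteq> cyclic_succ L p"
      using assms cyclic_succ_eq_iff by (cases "x < L") (auto simp: cyclic_succ_def)
    then show ?thesis using False by (simp add: copy_step_def)
  qed
qed

lemma foldl_copy_step_cyclic_succ:
  assumes "set ps \<subseteq> {0..<L}"
  shows "foldl (copy_step L) D (map (cyclic_succ L) ps) \<circ> cyclic_succ L
       = foldl (copy_step L) (D \<circ> cyclic_succ L) ps"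
  using assms by (induction ps arbitrary: D) (auto simp: copy_step_cyclic_succ)

lemma copy_source_cyclic_succ:
  assumes "\<sigma> permutes {0..<L}"
  shows "copy_source L (cyclic_succ L \<circ> \<sigma>) \<circ> cyclic_succ L = cyclic_succ L \<circ> copy_source L \<sigma>"
proof -
  have "set (map \<sigma> [0..<L]) \<subseteq> {0..<L}"
    using permutes_in_image[OF assms] by (auto simp: image_subset_iff)
  then have "copy_source L (cyclic_succ L \<circ> \<sigma>) \<circ> cyclic_succ L = sweep L \<sigma> (cyclic_succ L)"
    using foldl_copy_step_cyclic_succ[of "map \<sigma> [0..<L]" L id]
    unfolding copy_source_def sweep_eq_foldl by (simp add: map_map)
  also have "\<dots> = cyclic_succ L \<circ> copy_source L \<sigma>"
    by (rule sweep_eq_comp_copy_source)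
  finally show ?thesis .
qed

definition descendants :: "nat \<Rightarrow> (nat \<Rightarrow> nat) \<Rightarrow> nat \<Rightarrow> nat set" where
  "descendants L \<sigma> y = {x \<in> {0..<L}. copy_source L \<sigma> x = y}"

lemma cyclic_succ_mem_descendants_iff:
  assumes "\<sigma> permutes {0..<L}" "x < L" "y < L"
  shows "cyclic_succ L x \<in> descendants L (cyclic_succ L \<circ> \<sigma>) (cyclic_succ L y)
         \<longleftrightarrow> x \<in> descendants L \<sigma> y"
  using fun_cong[OF copy_source_cyclic_succ[OF assms(1)], of x] assms(2,3)
  by (simp add: descendants_def cyclic_succ_lt cyclic_succ_eq_iff copy_source_lt)

lemma descendants_cyclic_succ:
  assumes "\<sigma> permutes {0..<L}" "y < L"
  shows "descendants L (cyclic_succ L \<circ> \<sigma>) (cyclic_succ L y) = cyclic_succ L ` descendants L \<sigma> y"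
proof (intro set_eqI iffI)
  fix x' assume x': "x' \<in> descendants L (cyclic_succ L \<circ> \<sigma>) (cyclic_succ L y)"
  then obtain x where "x < L" "x' = cyclic_succ L x"
    using cyclic_succ_image[of L] by (force simp: descendants_def)
  with x' show "x' \<in> cyclic_succ L ` descendants L \<sigma> y"
    using cyclic_succ_mem_descendants_iff[OF assms(1) _ assms(2)] by blast
next
  fix x' assume "x' \<in> cyclic_succ L ` descendants L \<sigma> y"
  then show "x' \<in> descendants L (cyclic_succ L \<circ> \<sigma>) (cyclic_succ L y)"
    using cyclic_succ_mem_descendants_iff[OF assms(1) _ assms(2)] by (auto simp: descendants_def)
qed

lemma card_descendants_cyclic_succ:
  assumes "\<sigma> permutes {0..<L}" "y < L"
  shows "card (descendants L (cyclic_succ L \<circ> \<sigma>) (cyclic_succ L y)) = card (descendants L \<sigma> y)"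
  unfolding descendants_cyclic_succ[OF assms]
  by (rule card_image, rule inj_on_subset[OF inj_on_cyclic_succ]) (auto simp: descendants_def)

lemma sum_card_descendants: "(\<Sum>y\<in>{0..<L}. card (descendants L \<sigma> y)) = L"
  using sum.group[of "{0..<L}" "{0..<L}" "copy_source L \<sigma>" "\<lambda>_. 1::nat"]
  by (simp add: descendants_def image_subset_iff copy_source_lt)

lemma sum_permutations_card_descendants_cyclic_succ:
  assumes "y < L"
  shows "(\<Sum>\<sigma> | \<sigma> permutes {0..<L}. card (descendants L \<sigma> (cyclic_succ L y)))
       = (\<Sum>\<sigma> | \<sigma> permutes {0..<L}. card (descendants L \<sigma> y))"
  by (subst setum_permutations_compose_left[OF cyclic_succ_permutes])
     (simp add: card_descendants_cyclic_succ assms)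

lemma sum_permutations_card_descendants:
  assumes "y < L"
  shows "(\<Sum>\<sigma> | \<sigma> permutes {0..<L}. card (descendants L \<sigma> y)) = fact L"
proof -
  define N where "N y = (\<Sum>\<sigma> | \<sigma> permutes {0..<L}. card (descendants L \<sigma> y))" for y
  have N_const: "N y = N 0" if "y < L" for y
    using that
  proof (induction y)
    case (Suc y)
    then have "cyclic_succ L y = Suc y"
      by (simp add: cyclic_succ_def)
    then show ?case
      using Suc sum_permutations_card_descendants_cyclic_succ[of y L] by (simp add: N_def)
  qed simp
  have "L * N 0 = (\<Sum>y\<in>{0..<L}. N 0)"
    by simp
  also have "\<dots> = (\<Sum>y\<in>{0..<L}. N y)"
    by (rule sum.cong[OF refl], rule N_const[symmetric]) simp
  also have "\<dots> = (\<Sum>\<sigma> | \<sigma> permutes {0..<L}. L)"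
    unfolding N_def by (subst sum.swap) (simp add: sum_card_descendants)
  also have "\<dots> = L * fact L"
    by (simp add: card_permutations)
  finally have "N 0 = fact L"
    using assms by simp
  then show ?thesis
    using N_const[OF assms] by (simp add: N_def)
qed

lemma count_col_eq_sum: "count_col L a G = (\<Sum>x\<in>{0..<L}. of_bool (G x = a))"
  by (simp add: count_col_def Int_def)

lemma count_col_sweep:
  "count_col L a (sweep L \<sigma> G) = (\<Sum>y\<in>{0..<L}. of_bool (G y = a) * card (descendants L \<sigma> y))"
proof -
  have "count_col L a (sweep L \<sigma> G) = (\<Sum>x\<in>{0..<L}. of_bool (G (copy_source L \<sigma> x) = a))"
    by (simp add: count_col_eq_sum sweep_eq_comp_copy_source)
  also have "\<dots> = (\<Sum>y\<in>{0..<L}. \<Sum>x\<in>descendants L \<sigma> y. of_bool (G (copy_source L \<sigma> x) = a))"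
    unfolding descendants_def by (rule sum.group[symmetric]) (auto simp: copy_source_lt)
  also have "\<dots> = (\<Sum>y\<in>{0..<L}. of_bool (G y = a) * card (descendants L \<sigma> y))"
    by (intro sum.cong) (auto simp: descendants_def)
  finally show ?thesis .
qed

lemma sum_permutations_count_col_sweep:
  "(\<Sum>\<sigma> | \<sigma> permutes {0..<L}. count_col L a (sweep L \<sigma> G)) = fact L * count_col L a G"
proof -
  have "(\<Sum>\<sigma> | \<sigma> permutes {0..<L}. count_col L a (sweep L \<sigma> G))
      = (\<Sum>y\<in>{0..<L}. of_bool (G y = a) * (\<Sum>\<sigma> | \<sigma> permutes {0..<L}. card (descendants L \<sigma> y)))"
    unfolding count_col_sweep sum_distrib_left by (rule sum.swap)
  also have "\<dots> = (\<Sum>y\<in>{0..<L}. of_bool (G y = a) * fact L)"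
    by (intro sum.cong) (simp_all add: sum_permutations_card_descendants)
  also have "\<dots> = fact L * count_col L a G"
    unfolding count_col_eq_sum sum_distrib_left by (simp only: mult.commute)
  finally show ?thesis .
qed

lemma expectation_count_col_step_pmf:
  "measure_pmf.expectation (step_pmf L G) (\<lambda>G. real (count_col L a G)) = real (count_col L a G)"
proof -
  let ?P = "{\<sigma>. \<sigma> permutes {0..<L}}"
  have P: "finite ?P" "?P \<noteq> {}" "card ?P = fact L"
    by (simp_all add: finite_permutations card_permutations) (use permutes_id in blast)
  have "measure_pmf.expectation (step_pmf L G) (\<lambda>G. real (count_col L a G))
      = (\<Sum>\<sigma>\<in>?P. real (count_col L a (sweep L \<sigma> G))) / card ?P"
    unfolding step_pmf_def by (simp add: integral_pmf_of_set[OF P(2,1)])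
  also have "\<dots> = real (count_col L a G)"
    using sum_permutations_count_col_sweep[of L a G, THEN arg_cong[where f = real]] P(3)
    by (simp del: of_nat_sum add: of_nat_sum[symmetric])
  finally show ?thesis .
qed


lemma finite_set_step_pmf: "finite (set_pmf (step_pmf L G))"
proof -
  have "set_pmf (pmf_of_set {\<sigma>. \<sigma> permutes {0..<L}}) = {\<sigma>. \<sigma> permutes {0..<L}}"
    by (rule set_pmf_of_set) (auto intro: exI[of _ id] finite_permutations)
  then show ?thesis
    by (simp add: step_pmf_def finite_permutations)
qed

lemma length_traj: "h \<in> set_pmf (traj L G0 n) \<Longrightarrow> length h = Suc n"
  by (induction n arbitrary: h) auto

lemma finite_set_traj: "finite (set_pmf (traj L G0 n))"
  by (induction n) (auto simp: finite_set_step_pmf)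

lemma history_martingale_traj:
  assumes step: "\<And>G. measure_pmf.expectation (step_pmf L G) X = X G"
  shows "history_martingale (traj L G0) X"
  unfolding history_martingale_def
proof (intro allI)
  fix n h0
  let ?f = "\<lambda>h. (X (h ! Suc n) - X (h ! n)) * indicator {h. take (Suc n) h = h0} h"
  have extend: "measure_pmf.expectation (map_pmf (\<lambda>g. h @ [g]) (step_pmf L (last h))) ?f = 0"
    if "h \<in> set_pmf (traj L G0 n)" for h
  proof -
    have len: "length h = Suc n"
      using length_traj[OF that] .
    then have "last h = h ! n"
      by (subst last_conv_nth) auto
    with len have "?f (h @ [g]) = (X g - X (last h)) * indicator {h. take (Suc n) h = h0} h" for g
      by (simp add: nth_append indicator_def)
    moreover have "integrable (measure_pmf (step_pmf L (last h))) X"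
      by (rule integrable_measure_pmf_finite[OF finite_set_step_pmf])
    ultimately show ?thesis
      using step[of "last h"] by simp
  qed
  have "measure_pmf.expectation (traj L G0 (Suc n)) ?f
      = (\<Sum>h\<in>set_pmf (traj L G0 n). pmf (traj L G0 n) h *\<^sub>R
           measure_pmf.expectation (map_pmf (\<lambda>g. h @ [g]) (step_pmf L (last h))) ?f)"
    unfolding traj.simps
    by (rule pmf_expectation_bind[OF finite_set_traj]) (simp_all add: finite_set_step_pmf)
  also have "\<dots> = 0"
    using extend by (simp del: integral_map_pmf)
  finally show "measure_pmf.expectation (traj L G0 (Suc n)) ?f = 0" .
qed

theorem lemma3:
  fixes L :: nat and \<Gamma>0 :: "nat \<Rightarrow> bool" and col0 :: "nat \<Rightarrow> 'c" and a :: 'c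
  assumes "L \<ge> 1"
    and "run_coloring L \<Gamma>0 col0"
    and "a \<in> col0 ` {0..<L}"
  shows "history_martingale (traj L col0) (\<lambda>G. real (count_col L a G))"
  by (rule history_martingale_traj) (rule expectation_count_col_step_pmf)

end
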